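(* Let $c\ge 2$ be an integer with $\omega\ge 1$ distinct prime factors. Then for every real $x>0$, $$\frac{\varphi(c)}{x}-2^{\omega-1}<E_c(x)<\frac{\varphi(c)}{x}+2^{\omega-1}.$$
   Context: $\varphi$ is Euler's totient function. For a positive integer $c$ with distinct prime factors $q_1,\dots,q_\omega$ and real $x\ne 0$, $$E_c(x)=\sum_{S\subseteq\{1,\dots,\omega\}}(-1)^{|S|}\left\lfloor \frac{c}{x\prod_{i\in S}q_i}\right\rfloor.$$ *)

theory Defs
  imports "HOL-Analysis.Analysis" "HOL-Number_Theory.Number_Theory"
begin

definition E :: "nat \<Rightarrow> real \<Rightarrow> int" where
  "E c x = (\<Sum>S\<in>Pow (prime_factors c).
      (-1) ^ card S * \<lfloor>real c / (x * real (\<Prod>q\<in>S. q))\<rfloor>)"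

end

theory Submission
  imports Defs
begin

text \<open>Split each \<open>\<lfloor>y\<^sub>S\<rfloor>\<close>, \<open>y\<^sub>S = c / (x \<Prod>S)\<close>, into \<open>y\<^sub>S - frac y\<^sub>S\<close>. By the product formula
  \<open>\<phi>(c) = c \<Prod>\<^sub>q (1 - 1/q)\<close>, the signed \<open>y\<^sub>S\<close> sum to \<open>\<phi>(c)/x\<close>. For the fractional parts,
  fix one prime factor \<open>p\<close> and pair each \<open>S\<close> not containing \<open>p\<close> with \<open>S \<union> {p}\<close>:
  the alternating sum becomes a sum of \<open>2^(\<omega>-1)\<close> signed differences of two numbers
  in \<open>[0,1)\<close>, each of absolute value less than \<open>1\<close>.\<close>

lemma sum_Pow_insert_alternating:
  fixes f :: "'a set \<Rightarrow> 'b :: comm_ring_1"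
  assumes "finite Q" and "p \<notin> Q"
  shows "(\<Sum>S\<in>Pow (insert p Q). (-1) ^ card S * f S)
       = (\<Sum>S\<in>Pow Q. (-1) ^ card S * (f S - f (insert p S)))"
proof -
  have "(\<Sum>S\<in>Pow (insert p Q). (-1) ^ card S * f S) =
        (\<Sum>S\<in>Pow Q. (-1) ^ card S * f S) + (\<Sum>S\<in>insert p ` Pow Q. (-1) ^ card S * f S)"
    unfolding Pow_insert by (rule sum.union_disjoint) (use assms in auto)
  also have "(\<Sum>S\<in>insert p ` Pow Q. (-1) ^ card S * f S) =
      (\<Sum>S\<in>Pow Q. (-1) ^ card (insert p S) * f (insert p S))"
    by (subst sum.reindex) (use assms(2) in \<open>auto intro!: inj_onI\<close>)
  also have "\<dots> = (\<Sum>S\<in>Pow Q. - ((-1) ^ card S * f (insert p S)))"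
  proof (rule sum.cong)
    fix S assume "S \<in> Pow Q"
    with assms have "finite S" and "p \<notin> S" by (auto dest: finite_subset)
    then show "(-1) ^ card (insert p S) * f (insert p S) = - ((-1) ^ card S * f (insert p S))"
      by simp
  qed simp
  finally show ?thesis
    by (simp add: sum_negf[symmetric] sum.distrib[symmetric] algebra_simps)
qed

lemma abs_alternating_sum_Pow_less:
  fixes h :: "'a set \<Rightarrow> real"
  assumes "finite A" and "A \<noteq> {}"
    and "\<And>S. S \<subseteq> A \<Longrightarrow> 0 \<le> h S" and "\<And>S. S \<subseteq> A \<Longrightarrow> h S < 1"
  shows "\<bar>\<Sum>S\<in>Pow A. (-1) ^ card S * h S\<bar> < 2 ^ (card A - 1)"
proof -
  obtain p where "p \<in> A" using assms(2) by blast
  define Q where "Q = A - {p}"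
  have A: "A = insert p Q" and "p \<notin> Q" and "finite Q" and card_Q: "card Q = card A - 1"
    using \<open>p \<in> A\<close> assms(1) by (auto simp: Q_def)
  have "\<bar>\<Sum>S\<in>Pow A. (-1) ^ card S * h S\<bar>
      = \<bar>\<Sum>S\<in>Pow Q. (-1) ^ card S * (h S - h (insert p S))\<bar>"
    unfolding A using \<open>finite Q\<close> \<open>p \<notin> Q\<close> by (simp add: sum_Pow_insert_alternating)
  also have "\<dots> \<le> (\<Sum>S\<in>Pow Q. \<bar>h S - h (insert p S)\<bar>)"
    by (rule order_trans[OF sum_abs]) (simp add: abs_mult)
  also have "\<dots> < (\<Sum>S\<in>Pow Q. 1)"
  proof (rule sum_strict_mono)
    fix S assume "S \<in> Pow Q"
    then have "S \<subseteq> A" and "insert p S \<subseteq> A" using A by auto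
    then show "\<bar>h S - h (insert p S)\<bar> < 1"
      using assms(3,4) by (smt (verit))
  qed (use \<open>finite Q\<close> in auto)
  also have "\<dots> = 2 ^ (card A - 1)"
    using \<open>finite Q\<close> by (simp add: card_Pow card_Q)
  finally show ?thesis .
qed

lemma totient_eq_alternating_sum_prime_factors:
  "real (totient c) = (\<Sum>S\<in>Pow (prime_factors c). (-1) ^ card S * (real c / real (\<Prod>q\<in>S. q)))"
proof -
  let ?P = "prime_factors c"
  have "real (totient c) = real c * (\<Prod>p\<in>?P. - 1 / real p + 1)"
    by (simp add: totient_formula2)
  also have "(\<Prod>p\<in>?P. - 1 / real p + 1) = (\<Sum>S\<in>Pow ?P. (\<Prod>p\<in>S. - 1 / real p) * (\<Prod>p\<in>?P - S. 1))"
    by (rule prod_add) simp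
  also have "\<dots> = (\<Sum>S\<in>Pow ?P. (-1) ^ card S / real (\<Prod>q\<in>S. q))"
  proof (rule sum.cong)
    fix S
    have "(\<Prod>p\<in>S. - 1 / real p) = (\<Prod>p\<in>S. - 1) / (\<Prod>p\<in>S. real p)"
      by (rule prod_dividef)
    then show "(\<Prod>p\<in>S. - 1 / real p) * (\<Prod>p\<in>?P - S. 1) = (-1) ^ card S / real (\<Prod>q\<in>S. q)"
      by simp
  qed simp
  finally show ?thesis
    by (simp add: sum_distrib_left mult.commute)
qed

lemma E_eq_totient_minus_frac_sum:
  "real_of_int (E c x) = real (totient c) / x
     - (\<Sum>S\<in>Pow (prime_factors c). (-1) ^ card S * frac (real c / (x * real (\<Prod>q\<in>S. q))))"
proof -
  have "real (totient c) / x
      = (\<Sum>S\<in>Pow (prime_factors c). (-1) ^ card S * (real c / (x * real (\<Prod>q\<in>S. q))))"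
    unfolding totient_eq_alternating_sum_prime_factors sum_divide_distrib
    by (rule sum.cong) simp_all
  then show ?thesis
    by (simp add: E_def frac_def sum_subtractf[symmetric] algebra_simps)
qed

theorem lemma1:
  fixes c :: nat and x :: real
  assumes "c \<ge> 2" and "card (prime_factors c) \<ge> 1" and "x > 0"
  shows "real (totient c) / x - 2 ^ (card (prime_factors c) - 1) < real_of_int (E c x)
       \<and> real_of_int (E c x) < real (totient c) / x + 2 ^ (card (prime_factors c) - 1)"
proof -
  have "prime_factors c \<noteq> {}" using assms(2) by auto
  then have "\<bar>\<Sum>S\<in>Pow (prime_factors c). (-1) ^ card S * frac (real c / (x * real (\<Prod>q\<in>S. q)))\<bar>
      < 2 ^ (card (prime_factors c) - 1)"
    by (intro abs_alternating_sum_Pow_less) (auto simp: frac_lt_1)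
  then show ?thesis
    unfolding E_eq_totient_minus_frac_sum by linarith
qed

end
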